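(* Let $\sigma$ be a signature including $\{\triangleright, \wedge\}$, let $\mathcal{A}$ be a $\sigma$-algebra and let $\theta$ be a representation of $\mathcal{A}$ by partial functions. If $\theta$ is join complete, then $\theta$ is meet complete.
   Context: Signatures $\sigma$ are sets of operation symbols drawn from: $\triangleright$ (antidomain restriction), $;$ (composition), $\wedge$ (intersection), $\mathrm{upd}$ (update), $\sqcup$ (preferential union), $\mathsf{D}$ (domain), $\mathsf{A}$ (antidomain), interpreted on partial functions as: $f \triangleright g = \{(x,y) \in g : x \notin \mathrm{dom}(f)\}$; $f;g$ = relational composition ($f$ first); $f\wedge g = f\cap g$; $\mathrm{upd}(f,g)(x)$ is $f(x)$ if $f(x)$ defined and $g(x)$ undefined, $g(x)$ if both defined, undefined otherwise; $(f\sqcup g)(x)$ is $f(x)$ if defined, else $g(x)$; $\mathsf{D}(f)$ = identity on $\mathrm{dom}(f)$; $\mathsf{A}(f)$ = identity on the complement of $\mathrm{dom}(f)$ in the base. A representation by partial functions is an isomorphism onto a $\sigma$-algebra of partial functions with these operations. Define $0 := a\triangleright a$, $a\lhd b := (a\triangleright b)\triangleright b$, $a \le b :\iff a\lhd b = a$; for representable algebras this is a partial order and $a\le b \iff \theta(a)\subseteq\theta(b)$ for any representation $\theta$. $\theta$ is join complete if for every $S\subseteq\mathcal{A}$ with $\bigvee S$ existing, $\theta(\bigvee S)=\bigcup\theta[S]$; meet complete if for every nonempty $S$ with $\bigwedge S$ existing (in the poset $(\mathcal{A},\le)$), $\theta(\bigwedge S)=\bigcap\theta[S]$. *)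

theory Defs
  imports Main
begin

datatype opsym = AntiRes | Comp | Meet | Upd | PrefUnion | DomOp | AntiDomOp

text \<open>An algebra on the carrier type 'a, with an interpretation of every symbol;
  only symbols in the signature are relevant.\<close>
record 'a alg =
  ares  :: "'a \<Rightarrow> 'a \<Rightarrow> 'a"
  acomp :: "'a \<Rightarrow> 'a \<Rightarrow> 'a"
  ameet :: "'a \<Rightarrow> 'a \<Rightarrow> 'a"
  aupd  :: "'a \<Rightarrow> 'a \<Rightarrow> 'a"
  apun  :: "'a \<Rightarrow> 'a \<Rightarrow> 'a"
  adom  :: "'a \<Rightarrow> 'a"
  aadom :: "'a \<Rightarrow> 'a"

definition pf_ares :: "('b \<rightharpoonup> 'b) \<Rightarrow> ('b \<rightharpoonup> 'b) \<Rightarrow> ('b \<rightharpoonup> 'b)" where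
  "pf_ares f g = (\<lambda>x. if f x = None then g x else None)"
definition pf_comp :: "('b \<rightharpoonup> 'b) \<Rightarrow> ('b \<rightharpoonup> 'b) \<Rightarrow> ('b \<rightharpoonup> 'b)" where
  "pf_comp f g = (\<lambda>x. case f x of None \<Rightarrow> None | Some y \<Rightarrow> g y)"
definition pf_meet :: "('b \<rightharpoonup> 'b) \<Rightarrow> ('b \<rightharpoonup> 'b) \<Rightarrow> ('b \<rightharpoonup> 'b)" where
  "pf_meet f g = (\<lambda>x. if f x = g x then f x else None)"
definition pf_upd :: "('b \<rightharpoonup> 'b) \<Rightarrow> ('b \<rightharpoonup> 'b) \<Rightarrow> ('b \<rightharpoonup> 'b)" where
  "pf_upd f g = (\<lambda>x. case f x of None \<Rightarrow> None
                     | Some y \<Rightarrow> (case g x of None \<Rightarrow> Some y | Some z \<Rightarrow> Some z))"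
definition pf_pun :: "('b \<rightharpoonup> 'b) \<Rightarrow> ('b \<rightharpoonup> 'b) \<Rightarrow> ('b \<rightharpoonup> 'b)" where
  "pf_pun f g = (\<lambda>x. case f x of None \<Rightarrow> g x | Some y \<Rightarrow> Some y)"
definition pf_dom :: "('b \<rightharpoonup> 'b) \<Rightarrow> ('b \<rightharpoonup> 'b)" where
  "pf_dom f = (\<lambda>x. if f x \<noteq> None then Some x else None)"
definition pf_adom :: "'b set \<Rightarrow> ('b \<rightharpoonup> 'b) \<Rightarrow> ('b \<rightharpoonup> 'b)" where
  "pf_adom X f = (\<lambda>x. if x \<in> X \<and> f x = None then Some x else None)"

definition is_representation ::
  "opsym set \<Rightarrow> 'a alg \<Rightarrow> 'b set \<Rightarrow> ('a \<Rightarrow> ('b \<rightharpoonup> 'b)) \<Rightarrow> bool" where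
  "is_representation \<sigma> \<A> X \<theta> \<longleftrightarrow>
     inj \<theta> \<and>
     (\<forall>a. dom (\<theta> a) \<subseteq> X \<and> ran (\<theta> a) \<subseteq> X) \<and>
     (AntiRes \<in> \<sigma> \<longrightarrow> (\<forall>a b. \<theta> (ares \<A> a b) = pf_ares (\<theta> a) (\<theta> b))) \<and>
     (Comp \<in> \<sigma> \<longrightarrow> (\<forall>a b. \<theta> (acomp \<A> a b) = pf_comp (\<theta> a) (\<theta> b))) \<and>
     (Meet \<in> \<sigma> \<longrightarrow> (\<forall>a b. \<theta> (ameet \<A> a b) = pf_meet (\<theta> a) (\<theta> b))) \<and>
     (Upd \<in> \<sigma> \<longrightarrow> (\<forall>a b. \<theta> (aupd \<A> a b) = pf_upd (\<theta> a) (\<theta> b))) \<and>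
     (PrefUnion \<in> \<sigma> \<longrightarrow> (\<forall>a b. \<theta> (apun \<A> a b) = pf_pun (\<theta> a) (\<theta> b))) \<and>
     (DomOp \<in> \<sigma> \<longrightarrow> (\<forall>a. \<theta> (adom \<A> a) = pf_dom (\<theta> a))) \<and>
     (AntiDomOp \<in> \<sigma> \<longrightarrow> (\<forall>a. \<theta> (aadom \<A> a) = pf_adom X (\<theta> a)))"

definition alg_le :: "'a alg \<Rightarrow> 'a \<Rightarrow> 'a \<Rightarrow> bool" where
  "alg_le \<A> a b \<longleftrightarrow> ares \<A> (ares \<A> a b) b = a"

definition is_join :: "'a alg \<Rightarrow> 'a set \<Rightarrow> 'a \<Rightarrow> bool" where
  "is_join \<A> S j \<longleftrightarrow> (\<forall>s\<in>S. alg_le \<A> s j) \<and> (\<forall>u. (\<forall>s\<in>S. alg_le \<A> s u) \<longrightarrow> alg_le \<A> j u)"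

definition is_meet :: "'a alg \<Rightarrow> 'a set \<Rightarrow> 'a \<Rightarrow> bool" where
  "is_meet \<A> S m \<longleftrightarrow> (\<forall>s\<in>S. alg_le \<A> m s) \<and> (\<forall>l. (\<forall>s\<in>S. alg_le \<A> l s) \<longrightarrow> alg_le \<A> l m)"

definition join_complete :: "'a alg \<Rightarrow> ('a \<Rightarrow> ('b \<rightharpoonup> 'b)) \<Rightarrow> bool" where
  "join_complete \<A> \<theta> \<longleftrightarrow>
     (\<forall>S j. is_join \<A> S j \<longrightarrow> Map.graph (\<theta> j) = (\<Union>s\<in>S. Map.graph (\<theta> s)))"

definition meet_complete :: "'a alg \<Rightarrow> ('a \<Rightarrow> ('b \<rightharpoonup> 'b)) \<Rightarrow> bool" where
  "meet_complete \<A> \<theta> \<longleftrightarrow>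
     (\<forall>S m. S \<noteq> {} \<longrightarrow> is_meet \<A> S m \<longrightarrow> Map.graph (\<theta> m) = (\<Inter>s\<in>S. Map.graph (\<theta> s)))"

end

theory Submission
  imports Defs
begin

text \<open>Suppose some pair (x, y) lies in every \<theta> s, s \<in> S, but not in \<theta> m for the meet m.
  Then x \<notin> dom (\<theta> m), and k = m \<triangleright> s0 contains (x, y). The only lower bound of S below k
  is 0, and this forces k to be the join of the set Z of elements below k that are disjoint from
  some member of S: for an upper bound u of Z, the part r of k disagreeing with u is a lower
  bound of S, since for each s \<in> S the part of r disagreeing with s lies in Z, hence below u,
  hence is empty. Join completeness now puts (x, y) into some z \<in> Z, contradicting
  disjointness of z from a member of S.\<close>

lemma map_le_iff_graph_subset: "f \<subseteq>\<^sub>m g \<longleftrightarrow> Map.graph f \<subseteq> Map.graph g"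
  unfolding map_le_def Map.graph_def by (auto simp: dom_def)

definition map_disagreement :: "('b \<rightharpoonup> 'c) \<Rightarrow> ('b \<rightharpoonup> 'c) \<Rightarrow> ('b \<rightharpoonup> 'c)" where
  "map_disagreement f g = (\<lambda>x. if f x = g x then None else f x)"

lemma map_disagreement_map_le: "map_disagreement f g \<subseteq>\<^sub>m f"
  by (auto simp: map_le_def map_disagreement_def dom_def)

lemma map_disagreement_eq_empty_iff: "map_disagreement f g = Map.empty \<longleftrightarrow> f \<subseteq>\<^sub>m g"
  by (force simp: map_le_def map_disagreement_def dom_def fun_eq_iff)

lemma graph_map_disagreement_disjoint:
  "Map.graph (map_disagreement f g) \<inter> Map.graph g = {}"
  by (auto simp: map_disagreement_def Map.graph_def split: if_splits)

lemma map_le_disjoint_eq_empty: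
  assumes "f \<subseteq>\<^sub>m g" and "Map.graph f \<inter> Map.graph g = {}"
  shows "f = Map.empty"
proof
  fix x
  show "f x = None"
  proof (cases "f x")
    case (Some v)
    with assms(1) have "g x = Some v"
      by (force simp: map_le_def dom_def)
    with Some assms(2) show ?thesis
      by (auto simp: Map.graph_def)
  qed
qed

lemma map_le_pf_ares_and_left_eq_empty:
  assumes "h \<subseteq>\<^sub>m pf_ares f g" and "h \<subseteq>\<^sub>m f"
  shows "h = Map.empty"
proof
  fix x
  show "h x = None"
  proof (cases "h x")
    case (Some v)
    with assms have "f x = Some v" and "pf_ares f g x = Some v"
      by (force simp: map_le_def dom_def)+
    then show ?thesis
      by (simp add: pf_ares_def)
  qed
qed

lemma representation_ares:
  assumes "AntiRes \<in> \<sigma>" and "is_representation \<sigma> \<A> X \<theta>"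
  shows "\<theta> (ares \<A> a b) = pf_ares (\<theta> a) (\<theta> b)"
  using assms unfolding is_representation_def by blast

lemma representation_meet:
  assumes "Meet \<in> \<sigma>" and "is_representation \<sigma> \<A> X \<theta>"
  shows "\<theta> (ameet \<A> a b) = pf_meet (\<theta> a) (\<theta> b)"
  using assms unfolding is_representation_def by blast

lemma alg_le_iff_map_le:
  assumes "AntiRes \<in> \<sigma>" and "is_representation \<sigma> \<A> X \<theta>"
  shows "alg_le \<A> a b \<longleftrightarrow> \<theta> a \<subseteq>\<^sub>m \<theta> b"
proof -
  have "inj \<theta>"
    using assms(2) unfolding is_representation_def by blast
  then have "alg_le \<A> a b \<longleftrightarrow> pf_ares (pf_ares (\<theta> a) (\<theta> b)) (\<theta> b) = \<theta> a"
    unfolding alg_le_def representation_ares[OF assms, symmetric] by (auto dest: injD)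
  also have "\<dots> \<longleftrightarrow> \<theta> a \<subseteq>\<^sub>m \<theta> b"
    unfolding pf_ares_def map_le_def fun_eq_iff dom_def by (auto split: if_splits)
  finally show ?thesis .
qed

lemma representation_disagreement:
  assumes "{AntiRes, Meet} \<subseteq> \<sigma>" and "is_representation \<sigma> \<A> X \<theta>"
  shows "\<theta> (ares \<A> (ameet \<A> a b) a) = map_disagreement (\<theta> a) (\<theta> b)"
  using assms by (auto simp: representation_ares representation_meet fun_eq_iff
      pf_ares_def pf_meet_def map_disagreement_def)

lemma is_join_parts_disjoint_from_member:
  assumes \<sigma>: "{AntiRes, Meet} \<subseteq> \<sigma>" and rep: "is_representation \<sigma> \<A> X \<theta>"
    and lower_bounds_below_k: "\<And>r. \<theta> r \<subseteq>\<^sub>m \<theta> k \<Longrightarrow> \<forall>s\<in>S. \<theta> r \<subseteq>\<^sub>m \<theta> s \<Longrightarrow> \<theta> r = Map.empty"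
  shows "is_join \<A>
    {z. \<theta> z \<subseteq>\<^sub>m \<theta> k \<and> (\<exists>s\<in>S. Map.graph (\<theta> z) \<inter> Map.graph (\<theta> s) = {})} k"
    (is "is_join \<A> ?Z k")
proof -
  have le: "\<And>a b. alg_le \<A> a b \<longleftrightarrow> \<theta> a \<subseteq>\<^sub>m \<theta> b"
    using \<sigma> by (intro alg_le_iff_map_le[OF _ rep]) simp
  have disagree: "\<And>a b. \<theta> (ares \<A> (ameet \<A> a b) a) = map_disagreement (\<theta> a) (\<theta> b)"
    using \<sigma> rep by (rule representation_disagreement)
  have "\<theta> k \<subseteq>\<^sub>m \<theta> u" if upper: "\<forall>z\<in>?Z. \<theta> z \<subseteq>\<^sub>m \<theta> u" for u
  proof -
    define r where "r = ares \<A> (ameet \<A> k u) k"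
    have r: "\<theta> r = map_disagreement (\<theta> k) (\<theta> u)"
      by (simp add: r_def disagree)
    have r_lower: "\<theta> r \<subseteq>\<^sub>m \<theta> s" if "s \<in> S" for s
    proof -
      define z where "z = ares \<A> (ameet \<A> r s) r"
      have z: "\<theta> z = map_disagreement (\<theta> r) (\<theta> s)"
        by (simp add: z_def disagree)
      have z_le_r: "\<theta> z \<subseteq>\<^sub>m \<theta> r"
        unfolding z by (rule map_disagreement_map_le)
      have "\<theta> z \<subseteq>\<^sub>m \<theta> k"
        using z_le_r map_disagreement_map_le unfolding r by (rule map_le_trans)
      moreover have "Map.graph (\<theta> z) \<inter> Map.graph (\<theta> s) = {}"
        unfolding z by (rule graph_map_disagreement_disjoint)
      ultimately have "z \<in> ?Z"
        using \<open>s \<in> S\<close> by blast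
      then have "\<theta> z \<subseteq>\<^sub>m \<theta> u"
        using upper by blast
      moreover have "Map.graph (\<theta> z) \<inter> Map.graph (\<theta> u) = {}"
        using z_le_r graph_map_disagreement_disjoint[of "\<theta> k" "\<theta> u"]
        by (auto simp: r map_le_iff_graph_subset)
      ultimately have "\<theta> z = Map.empty"
        by (rule map_le_disjoint_eq_empty)
      then show ?thesis
        by (simp add: z map_disagreement_eq_empty_iff)
    qed
    have "\<theta> r \<subseteq>\<^sub>m \<theta> k"
      by (simp add: r map_disagreement_map_le)
    then have "\<theta> r = Map.empty"
      using r_lower by (blast intro: lower_bounds_below_k)
    then show ?thesis
      by (simp add: r map_disagreement_eq_empty_iff)
  qed
  then show ?thesis
    unfolding is_join_def le by (intro conjI ballI allI impI) auto
qed

lemma inter_graphs_subset_graph_meet: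
  assumes \<sigma>: "{AntiRes, Meet} \<subseteq> \<sigma>" and rep: "is_representation \<sigma> \<A> X \<theta>"
    and jc: "join_complete \<A> \<theta>" and "s\<^sub>0 \<in> S" and meet: "is_meet \<A> S m"
  shows "(\<Inter>s\<in>S. Map.graph (\<theta> s)) \<subseteq> Map.graph (\<theta> m)"
proof (rule subrelI, rule ccontr)
  fix x y
  assume xy: "(x, y) \<in> (\<Inter>s\<in>S. Map.graph (\<theta> s))" and "(x, y) \<notin> Map.graph (\<theta> m)"
  have le: "\<And>a b. alg_le \<A> a b \<longleftrightarrow> \<theta> a \<subseteq>\<^sub>m \<theta> b"
    using \<sigma> by (intro alg_le_iff_map_le[OF _ rep]) simp
  have m_le: "\<theta> m \<subseteq>\<^sub>m \<theta> s\<^sub>0" and glb: "\<And>l. \<forall>s\<in>S. \<theta> l \<subseteq>\<^sub>m \<theta> s \<Longrightarrow> \<theta> l \<subseteq>\<^sub>m \<theta> m"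
    using meet \<open>s\<^sub>0 \<in> S\<close> unfolding is_meet_def le by blast+
  have "\<theta> s\<^sub>0 x = Some y"
    using xy \<open>s\<^sub>0 \<in> S\<close> by (auto simp: Map.graph_def)
  with m_le \<open>(x, y) \<notin> Map.graph (\<theta> m)\<close> have "\<theta> m x = None"
    by (cases "\<theta> m x") (auto simp: map_le_def dom_def Map.graph_def)
  define k where "k = ares \<A> m s\<^sub>0"
  have k: "\<theta> k = pf_ares (\<theta> m) (\<theta> s\<^sub>0)"
    using \<sigma> by (simp add: k_def representation_ares[OF _ rep])
  have "\<theta> r = Map.empty" if "\<theta> r \<subseteq>\<^sub>m \<theta> k" and "\<forall>s\<in>S. \<theta> r \<subseteq>\<^sub>m \<theta> s" for r
    using that(1) glb[OF that(2)] unfolding k by (rule map_le_pf_ares_and_left_eq_empty)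
  then have "is_join \<A> {z. \<theta> z \<subseteq>\<^sub>m \<theta> k \<and>
      (\<exists>s\<in>S. Map.graph (\<theta> z) \<inter> Map.graph (\<theta> s) = {})} k"
    by (rule is_join_parts_disjoint_from_member[OF \<sigma> rep])
  with jc have "Map.graph (\<theta> k) = (\<Union>z\<in>{z. \<theta> z \<subseteq>\<^sub>m \<theta> k \<and>
      (\<exists>s\<in>S. Map.graph (\<theta> z) \<inter> Map.graph (\<theta> s) = {})}. Map.graph (\<theta> z))"
    unfolding join_complete_def by blast
  moreover have "(x, y) \<in> Map.graph (\<theta> k)"
    using xy \<open>\<theta> m x = None\<close> \<open>s\<^sub>0 \<in> S\<close> by (auto simp: k pf_ares_def Map.graph_def)
  ultimately show False
    using xy by blast
qed

theorem corollary3p6: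
  fixes \<sigma> :: "opsym set" and \<A> :: "'a alg" and X :: "'b set"
    and \<theta> :: "'a \<Rightarrow> ('b \<rightharpoonup> 'b)"
  assumes "{AntiRes, Meet} \<subseteq> \<sigma>"
    and "is_representation \<sigma> \<A> X \<theta>"
    and "join_complete \<A> \<theta>"
  shows "meet_complete \<A> \<theta>"
  unfolding meet_complete_def
proof (intro allI impI)
  fix S m
  assume "S \<noteq> {}" and meet: "is_meet \<A> S m"
  then obtain s\<^sub>0 where "s\<^sub>0 \<in> S"
    by blast
  have "Map.graph (\<theta> m) \<subseteq> Map.graph (\<theta> s)" if "s \<in> S" for s
    using meet that alg_le_iff_map_le[OF _ assms(2)] assms(1)
    by (auto simp: is_meet_def map_le_iff_graph_subset)
  then show "Map.graph (\<theta> m) = (\<Inter>s\<in>S. Map.graph (\<theta> s))"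
    using inter_graphs_subset_graph_meet[OF assms \<open>s\<^sub>0 \<in> S\<close> meet] by blast
qed

end
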